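(* Let $\mathcal G_{yz}$ with arrival distribution $\beta$ be obtained from $(\mathcal G_x,\alpha)$ by decomposing the node $x$ into $y$ and $z$. Let $W_{yz}$ be the FCFS Markov chain of $(\mathcal G_{yz},\beta)$. For each state (word) $w$ of $W_{yz}$ let $\mathcal M(w)$ be the set of words obtained from $w$ by replacing each occurrence of $y$ or $z$ in $w$ independently by $y$ or $z$ (so $\mathcal M(w)=\{w\}$ if $w$ contains neither $y$ nor $z$). Then $W_{yz}$ is ordinarily lumpable with respect to the partition $\{\mathcal M(w)\}$ of its state space, and the lumped Markov chain, after identifying $\mathcal M(w)$ with the word obtained from $w$ by replacing every $y$ and $z$ by $x$, is the FCFS Markov chain $W_x$ of $(\mathcal G_x,\alpha)$.
   Context: A matching model consists of a finite connected simple graph and an arrival distribution on its nodes with positive entries; in each time step an item of class $i$ arrives with probability $\alpha_i$ (independently over time). Under FCFS, the state is the word of unmatched item classes in order of arrival (no two letters adjacent in the graph); an arriving item of class $i$ deletes the oldest letter of the word that is a neighbour of $i$, and if there is none $i$ is appended at the end. Decomposition: given $\mathcal G_x=(\mathcal V,\xi)$ with node $x$ and arrival distribution $\alpha$, $\mathcal G_{yz}$ has node set $(\mathcal V\setminus\{x\})\cup\{y,z\}$ with $y,z$ new nodes; edges among $\mathcal V\setminus\{x\}$ are as in $\mathcal G_x$, each of $y$ and $z$ is adjacent exactly to the neighbours of $x$ in $\mathcal G_x$ (so $y,z$ are not adjacent), and $\beta_y>0$, $\beta_z>0$, $\beta_y+\beta_z=\alpha_x$, $\beta_i=\alpha_i$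 for $i\ne x$. A Markov chain with transition matrix $P$ is ordinarily lumpable with respect to a partition $\{A_v\}$ of its state space if for every pair of blocks $A_u,A_v$, $\sum_{j\in A_v}P(w,j)$ is the same for all $w\in A_u$. *)

theory Defs
  imports "HOL-Analysis.Analysis" "HOL-Library.Disjoint_Sets"
begin

definition simple_graph :: "'v set \<Rightarrow> ('v \<Rightarrow> 'v \<Rightarrow> bool) \<Rightarrow> bool" where
  "simple_graph V E \<longleftrightarrow> finite V \<and> (\<forall>a b. E a b \<longrightarrow> a \<in> V \<and> b \<in> V)
     \<and> (\<forall>a b. E a b \<longrightarrow> E b a) \<and> (\<forall>a. \<not> E a a)"

definition graph_connected :: "'v set \<Rightarrow> ('v \<Rightarrow> 'v \<Rightarrow> bool) \<Rightarrow> bool" where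
  "graph_connected V E \<longleftrightarrow> V \<noteq> {} \<and> (\<forall>a\<in>V. \<forall>b\<in>V. E\<^sup>*\<^sup>* a b)"

definition matching_model :: "'v set \<Rightarrow> ('v \<Rightarrow> 'v \<Rightarrow> bool) \<Rightarrow> ('v \<Rightarrow> real) \<Rightarrow> bool" where
  "matching_model V E \<alpha> \<longleftrightarrow> simple_graph V E \<and> graph_connected V E
     \<and> (\<forall>i\<in>V. \<alpha> i > 0) \<and> (\<Sum>i\<in>V. \<alpha> i) = 1"

definition fcfs_states :: "'v set \<Rightarrow> ('v \<Rightarrow> 'v \<Rightarrow> bool) \<Rightarrow> 'v list set" where
  "fcfs_states V E = {w. set w \<subseteq> V \<and> (\<forall>a\<in>set w. \<forall>b\<in>set w. \<not> E a b)}"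

text \<open>Arrival of class i: delete the oldest neighbour of i in the word, or append i.\<close>
definition fcfs_step :: "('v \<Rightarrow> 'v \<Rightarrow> bool) \<Rightarrow> 'v \<Rightarrow> 'v list \<Rightarrow> 'v list" where
  "fcfs_step E i w =
     (let p = takeWhile (\<lambda>j. \<not> E i j) w; r = dropWhile (\<lambda>j. \<not> E i j) w
      in if r = [] then w @ [i] else p @ tl r)"

definition fcfs_P :: "'v set \<Rightarrow> ('v \<Rightarrow> 'v \<Rightarrow> bool) \<Rightarrow> ('v \<Rightarrow> real) \<Rightarrow> 'v list \<Rightarrow> 'v list \<Rightarrow> real" where
  "fcfs_P V E \<alpha> w w' = (\<Sum>i\<in>V. if fcfs_step E i w = w' then \<alpha> i else 0)"

definition ordinarily_lumpable :: "('s \<Rightarrow> 's \<Rightarrow> real) \<Rightarrow> 's set set \<Rightarrow> bool" where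
  "ordinarily_lumpable P Blocks \<longleftrightarrow>
     (\<forall>A\<in>Blocks. \<forall>B\<in>Blocks. \<forall>w1\<in>A. \<forall>w2\<in>A. infsum (P w1) B = infsum (P w2) B)"

definition decomp_nodes :: "'v set \<Rightarrow> 'v \<Rightarrow> 'v \<Rightarrow> 'v \<Rightarrow> 'v set" where
  "decomp_nodes V x y z = (V - {x}) \<union> {y, z}"

definition decomp_edges :: "('v \<Rightarrow> 'v \<Rightarrow> bool) \<Rightarrow> 'v \<Rightarrow> 'v \<Rightarrow> 'v \<Rightarrow> 'v \<Rightarrow> 'v \<Rightarrow> bool" where
  "decomp_edges E x y z a b \<longleftrightarrow>
     (a \<noteq> x \<and> b \<noteq> x \<and> a \<notin> {y, z} \<and> b \<notin> {y, z} \<and> E a b)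
     \<or> (a \<in> {y, z} \<and> b \<notin> {y, z} \<and> b \<noteq> x \<and> E x b)
     \<or> (b \<in> {y, z} \<and> a \<notin> {y, z} \<and> a \<noteq> x \<and> E a x)"

definition yz_class :: "'v \<Rightarrow> 'v \<Rightarrow> 'v list \<Rightarrow> 'v list set" where
  "yz_class y z w = {w'. length w' = length w \<and>
     (\<forall>k<length w. if w ! k \<in> {y, z} then w' ! k \<in> {y, z} else w' ! k = w ! k)}"

definition merge_yz :: "'v \<Rightarrow> 'v \<Rightarrow> 'v \<Rightarrow> 'v list \<Rightarrow> 'v list" where
  "merge_yz x y z w = map (\<lambda>a. if a = y \<or> a = z then x else a) w"

end

theory Submission
  imports Defs
begin

text \<open>
  Replacing y and z by x maps G_yz onto G_x so that two nodes of G_yz are adjacent exactly when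
  their images are. As the FCFS rule only asks which letters of the word are adjacent to the
  arriving class, this merge map commutes with every FCFS transition; it maps the states of G_yz
  onto those of G_x, and its fibres there are exactly the classes M(w). Hence the probability of
  jumping from w into the class of w' is the total arrival rate of the classes of G_yz whose
  transition lands in that fibre, which, because \<beta> y + \<beta> z = \<alpha> x, is the G_x transition
  probability between the merged words. It depends on w only through its merged word, which is
  lumpability.
\<close>

lemma map_fcfs_step:
  assumes "\<And>j. j \<in> set w \<Longrightarrow> E i j = E' (f i) (f j)"
  shows "map f (fcfs_step E i w) = fcfs_step E' (f i) (map f w)"
proof -
  have "takeWhile (\<lambda>j. \<not> E' (f i) j) (map f w) = map f (takeWhile (\<lambda>j. \<not> E i j) w)"
    by (simp add: takeWhile_map o_def)
      (rule arg_cong[where f="map f"], rule takeWhile_cong, auto simp: assms)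
  moreover have "dropWhile (\<lambda>j. \<not> E' (f i) j) (map f w) = map f (dropWhile (\<lambda>j. \<not> E i j) w)"
    by (simp add: dropWhile_map o_def)
      (rule arg_cong[where f="map f"], rule dropWhile_cong, auto simp: assms)
  ultimately show ?thesis
    unfolding fcfs_step_def Let_def by (simp add: map_tl)
qed

lemma fcfs_step_no_neighbour: "\<not> (\<exists>j\<in>set w. E i j) \<Longrightarrow> fcfs_step E i w = w @ [i]"
  by (simp add: fcfs_step_def dropWhile_eq_Nil_conv)

lemma set_fcfs_step_neighbour:
  assumes "\<exists>j\<in>set w. E i j"
  shows "set (fcfs_step E i w) \<subseteq> set w"
proof -
  let ?r = "dropWhile (\<lambda>j. \<not> E i j) w"
  have "?r \<noteq> []"
    using assms by (simp add: dropWhile_eq_Nil_conv)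
  moreover have "set (tl ?r) \<subseteq> set w"
    using set_dropWhileD[of _ "\<lambda>j. \<not> E i j" w] by (cases ?r) (auto simp del: dropWhile_eq_Nil_conv)
  ultimately show ?thesis
    by (auto simp: fcfs_step_def Let_def dest: set_takeWhileD)
qed

lemma fcfs_step_in_states:
  assumes "simple_graph V E" and "w \<in> fcfs_states V E" and "i \<in> V"
  shows "fcfs_step E i w \<in> fcfs_states V E"
proof (cases "\<exists>j\<in>set w. E i j")
  case True
  then have "set (fcfs_step E i w) \<subseteq> set w"
    by (rule set_fcfs_step_neighbour)
  with assms(2) show ?thesis
    unfolding fcfs_states_def by blast
next
  case False
  moreover have "\<forall>j\<in>set w. \<not> E j i" and "\<not> E i i"
    using False assms(1) unfolding simple_graph_def by blast+
  ultimately show ?thesis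
    using assms(2,3) by (simp add: fcfs_step_no_neighbour[of w E i] fcfs_states_def)
qed

lemma infsum_fcfs_P:
  assumes "finite V"
  shows "infsum (fcfs_P V E \<beta> w) B = (\<Sum>i\<in>V. if fcfs_step E i w \<in> B then \<beta> i else 0)"
proof -
  let ?R = "(\<lambda>i. fcfs_step E i w) ` V"
  have "infsum (fcfs_P V E \<beta> w) B = infsum (fcfs_P V E \<beta> w) (B \<inter> ?R)"
    by (rule infsum_cong_neutral) (auto simp: fcfs_P_def intro!: sum.neutral)
  also have "\<dots> = (\<Sum>u\<in>B \<inter> ?R. fcfs_P V E \<beta> w u)"
    using assms by simp
  also have "\<dots> = (\<Sum>i\<in>V. \<Sum>u\<in>B \<inter> ?R. if fcfs_step E i w = u then \<beta> i else 0)"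
    unfolding fcfs_P_def by (rule sum.swap)
  also have "\<dots> = (\<Sum>i\<in>V. if fcfs_step E i w \<in> B then \<beta> i else 0)"
    using assms by (intro sum.cong refl) (auto simp: sum.delta)
  finally show ?thesis .
qed

definition merge_node :: "'v \<Rightarrow> 'v \<Rightarrow> 'v \<Rightarrow> 'v \<Rightarrow> 'v" where
  "merge_node x y z a = (if a = y \<or> a = z then x else a)"

lemma merge_yz_eq_map: "merge_yz x y z = map (merge_node x y z)"
  by (simp add: merge_yz_def merge_node_def fun_eq_iff)

lemma set_yz_class_subset: "u \<in> yz_class y z w \<Longrightarrow> set u \<subseteq> set w \<union> {y, z}"
  by (auto simp: yz_class_def in_set_conv_nth split: if_splits) metis

lemma merge_yz_eq_iff_yz_class:
  assumes "x \<notin> set u" and "x \<notin> set v"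
  shows "merge_yz x y z u = merge_yz x y z v \<longleftrightarrow> u \<in> yz_class y z v"
proof -
  have letter: "merge_node x y z (u ! k) = merge_node x y z (v ! k) \<longleftrightarrow>
      (if v ! k \<in> {y, z} then u ! k \<in> {y, z} else u ! k = v ! k)"
    if "k < length u" "k < length v" for k
    using assms that nth_mem[of k u] nth_mem[of k v] by (auto simp: merge_node_def)
  have "merge_yz x y z u = merge_yz x y z v \<longleftrightarrow> length u = length v \<and>
      (\<forall>k<length v. merge_node x y z (u ! k) = merge_node x y z (v ! k))"
    by (auto simp: merge_yz_eq_map list_eq_iff_nth_eq)
  also have "\<dots> \<longleftrightarrow> u \<in> yz_class y z v"
    unfolding yz_class_def mem_Collect_eq using letter by (metis (no_types, lifting))
  finally show ?thesis .
qed

lemma partition_on_fibres: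
  assumes "\<And>w. w \<in> S \<Longrightarrow> C w = {u \<in> S. f u = f w}"
  shows "partition_on S (C ` S)"
proof (rule partition_onI)
  show "\<Union> (C ` S) = S" "{} \<notin> C ` S"
    using assms by auto
  fix A B assume "A \<in> C ` S" "B \<in> C ` S" "A \<noteq> B"
  then show "disjnt A B"
    using assms by (auto simp: disjnt_def)
qed

lemma fibre_eq_iff:
  assumes "\<And>w. w \<in> S \<Longrightarrow> C w = {u \<in> S. f u = f w}" and "w \<in> S" and "w' \<in> S"
  shows "C w = C w' \<longleftrightarrow> f w = f w'"
  using assms by auto

lemma ordinarily_lumpable_fibres:
  assumes fibre: "\<And>w. w \<in> S \<Longrightarrow> C w = {u \<in> S. f u = f w}"
    and transition: "\<And>w w'. w \<in> S \<Longrightarrow> w' \<in> S \<Longrightarrow> infsum (P w) (C w') = Q (f w) (f w')"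
  shows "ordinarily_lumpable P (C ` S)"
  unfolding ordinarily_lumpable_def
proof (intro ballI)
  fix A B w1 w2 assume "A \<in> C ` S" "B \<in> C ` S" "w1 \<in> A" "w2 \<in> A"
  then obtain a b where "a \<in> S" "w1 \<in> C a" "w2 \<in> C a" and b: "b \<in> S" "B = C b"
    by blast
  then have "w1 \<in> S" "w2 \<in> S" "f w1 = f w2"
    by (simp_all add: fibre)
  then show "infsum (P w1) B = infsum (P w2) B"
    using b by (simp add: transition)
qed

lemma simple_graph_decomp:
  assumes "simple_graph V E"
  shows "simple_graph (decomp_nodes V x y z) (decomp_edges E x y z)"
  using assms by (auto simp: simple_graph_def decomp_nodes_def decomp_edges_def)

lemma sum_decomp_nodes:
  assumes "finite V" and "x \<in> V" and "y \<notin> V" and "z \<notin> V" and "y \<noteq> z"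
    and "\<beta> y + \<beta> z = \<alpha> x" and "\<forall>i\<in>V - {x}. \<beta> i = \<alpha> i"
  shows "(\<Sum>i\<in>decomp_nodes V x y z. if P (merge_node x y z i) then \<beta> i else 0)
       = (\<Sum>i\<in>V. if P i then \<alpha> i else 0)"
proof -
  let ?f = "\<lambda>i. if P (merge_node x y z i) then \<beta> i else 0"
  let ?g = "\<lambda>i. if P i then \<alpha> i else 0"
  have split: "(\<Sum>i\<in>decomp_nodes V x y z. ?f i) = (\<Sum>i\<in>V - {x}. ?f i) + (\<Sum>i\<in>{y, z}. ?f i)"
    unfolding decomp_nodes_def using assms by (intro sum.union_disjoint) auto
  have others: "(\<Sum>i\<in>V - {x}. ?f i) = (\<Sum>i\<in>V - {x}. ?g i)"
    using assms by (intro sum.cong) (auto simp: merge_node_def)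
  have split_pair: "(\<Sum>i\<in>{y, z}. ?f i) = ?g x"
    using assms by (simp add: merge_node_def)
  show ?thesis
    by (simp only: split others split_pair sum.remove[OF assms(1,2), of ?g] add.commute)
qed

locale node_decomposition =
  fixes V :: "'v set" and E :: "'v \<Rightarrow> 'v \<Rightarrow> bool" and x y z :: 'v
  assumes graph: "simple_graph V E" and x_in: "x \<in> V"
    and y_notin: "y \<notin> V" and z_notin: "z \<notin> V"
begin

abbreviation "Vyz \<equiv> decomp_nodes V x y z"
abbreviation "Eyz \<equiv> decomp_edges E x y z"
abbreviation "Syz \<equiv> fcfs_states Vyz Eyz"
abbreviation "merge_word \<equiv> merge_yz x y z"

lemma x_notin_decomp_nodes: "x \<notin> Vyz"
  using x_in y_notin z_notin by (auto simp: decomp_nodes_def)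

lemma merge_node_in: "a \<in> Vyz \<Longrightarrow> merge_node x y z a \<in> V"
  using x_in by (auto simp: decomp_nodes_def merge_node_def)

lemma decomp_edges_iff_merge:
  assumes "a \<in> Vyz" and "b \<in> Vyz"
  shows "Eyz a b \<longleftrightarrow> E (merge_node x y z a) (merge_node x y z b)"
proof -
  have "\<not> E x x" and "E x b \<Longrightarrow> b \<noteq> y \<and> b \<noteq> z" and "E a x \<Longrightarrow> a \<noteq> y \<and> a \<noteq> z"
    using graph y_notin z_notin unfolding simple_graph_def by blast+
  then show ?thesis
    using assms by (auto simp: decomp_edges_def decomp_nodes_def merge_node_def)
qed

lemma decomp_states_iff:
  "w \<in> Syz \<longleftrightarrow> set w \<subseteq> Vyz \<and> merge_word w \<in> fcfs_states V E"
  using merge_node_in decomp_edges_iff_merge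
  by (auto simp: fcfs_states_def merge_yz_eq_map subset_iff)

lemma x_notin_state: "w \<in> Syz \<Longrightarrow> x \<notin> set w"
  using x_notin_decomp_nodes by (auto simp: fcfs_states_def)

lemma merge_image_states: "merge_word ` Syz = fcfs_states V E"
proof
  show "merge_word ` Syz \<subseteq> fcfs_states V E"
    using decomp_states_iff by blast
next
  show "fcfs_states V E \<subseteq> merge_word ` Syz"
  proof
    fix v assume v: "v \<in> fcfs_states V E"
    define split where "split = map (\<lambda>a. if a = x then y else a) v"
    have "merge_word split = v"
      unfolding split_def merge_yz_eq_map map_map
      by (rule map_idI) (use v y_notin z_notin in \<open>auto simp: merge_node_def fcfs_states_def\<close>)
    moreover have "set split \<subseteq> Vyz"
      using v by (auto simp: split_def decomp_nodes_def fcfs_states_def)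
    ultimately show "v \<in> merge_word ` Syz"
      using v decomp_states_iff by (metis image_eqI)
  qed
qed

lemma yz_class_eq_fibre:
  assumes w: "w \<in> Syz"
  shows "yz_class y z w = {u \<in> Syz. merge_word u = merge_word w}"
proof (intro set_eqI iffI)
  fix u assume u: "u \<in> yz_class y z w"
  have "set w \<subseteq> Vyz" and "y \<in> Vyz" and "z \<in> Vyz"
    using w by (auto simp: fcfs_states_def decomp_nodes_def)
  then have u_nodes: "set u \<subseteq> Vyz"
    using set_yz_class_subset[OF u] by blast
  then have "merge_word u = merge_word w"
    using merge_yz_eq_iff_yz_class[of x u w y z] u x_notin_decomp_nodes x_notin_state[OF w] by blast
  moreover have "u \<in> Syz"
    using u_nodes w calculation by (simp add: decomp_states_iff)
  ultimately show "u \<in> {u \<in> Syz. merge_word u = merge_word w}"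
    by blast
next
  fix u assume "u \<in> {u \<in> Syz. merge_word u = merge_word w}"
  then show "u \<in> yz_class y z w"
    using merge_yz_eq_iff_yz_class[of x u w y z] x_notin_state w by blast
qed

lemma merge_fcfs_step:
  assumes "set w \<subseteq> Vyz" and "i \<in> Vyz"
  shows "merge_word (fcfs_step Eyz i w) = fcfs_step E (merge_node x y z i) (merge_word w)"
  unfolding merge_yz_eq_map
  using assms by (intro map_fcfs_step) (auto simp: decomp_edges_iff_merge)

lemma lumped_transition:
  assumes "y \<noteq> z" and "\<beta> y + \<beta> z = \<alpha> x" and "\<forall>i\<in>V - {x}. \<beta> i = \<alpha> i"
    and w: "w \<in> Syz" and w': "w' \<in> Syz"
  shows "infsum (fcfs_P Vyz Eyz \<beta> w) (yz_class y z w') = fcfs_P V E \<alpha> (merge_word w) (merge_word w')"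
proof -
  have fin_V: "finite V" and fin_Vyz: "finite Vyz"
    using graph simple_graph_decomp[OF graph] unfolding simple_graph_def by blast+
  have arrival: "fcfs_step Eyz i w \<in> yz_class y z w' \<longleftrightarrow>
      fcfs_step E (merge_node x y z i) (merge_word w) = merge_word w'" if i: "i \<in> Vyz" for i
  proof -
    have "fcfs_step Eyz i w \<in> Syz"
      using fcfs_step_in_states[OF simple_graph_decomp[OF graph] w i] .
    moreover have "set w \<subseteq> Vyz"
      using w by (simp add: fcfs_states_def)
    ultimately show ?thesis
      by (simp add: yz_class_eq_fibre[OF w'] merge_fcfs_step[OF _ i])
  qed
  have "infsum (fcfs_P Vyz Eyz \<beta> w) (yz_class y z w')
      = (\<Sum>i\<in>Vyz. if fcfs_step E (merge_node x y z i) (merge_word w) = merge_word w' then \<beta> i else 0)"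
    unfolding infsum_fcfs_P[OF fin_Vyz] by (intro sum.cong refl) (simp add: arrival)
  also have "\<dots> = fcfs_P V E \<alpha> (merge_word w) (merge_word w')"
    unfolding fcfs_P_def by (rule sum_decomp_nodes[OF fin_V x_in y_notin z_notin assms(1-3)])
  finally show ?thesis .
qed

end

theorem mainTheorem11:
  fixes V :: "'v set" and E :: "'v \<Rightarrow> 'v \<Rightarrow> bool" and \<alpha> \<beta> :: "'v \<Rightarrow> real"
    and x y z :: 'v
  assumes model: "matching_model V E \<alpha>"
    and x_in: "x \<in> V"
    and y_new: "y \<notin> V" and z_new: "z \<notin> V" and yz: "y \<noteq> z"
    and beta_y: "\<beta> y > 0" and beta_z: "\<beta> z > 0" and beta_sum: "\<beta> y + \<beta> z = \<alpha> x"
    and beta_other: "\<forall>i\<in>V - {x}. \<beta> i = \<alpha> i"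
  shows
    "let Vyz = decomp_nodes V x y z; Eyz = decomp_edges E x y z;
         Syz = fcfs_states Vyz Eyz; Pyz = fcfs_P Vyz Eyz \<beta>;
         Blocks = yz_class y z ` Syz
     in partition_on Syz Blocks
        \<and> ordinarily_lumpable Pyz Blocks
        \<and> merge_yz x y z ` Syz = fcfs_states V E
        \<and> (\<forall>w\<in>Syz. \<forall>w'\<in>Syz. merge_yz x y z w = merge_yz x y z w' \<longleftrightarrow> yz_class y z w = yz_class y z w')
        \<and> (\<forall>w\<in>Syz. \<forall>w'\<in>Syz.
             infsum (Pyz w) (yz_class y z w') = fcfs_P V E \<alpha> (merge_yz x y z w) (merge_yz x y z w'))"
proof -
  interpret node_decomposition V E x y z
    using model x_in y_new z_new by unfold_locales (simp_all add: matching_model_def)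
  have "partition_on Syz (yz_class y z ` Syz)"
    using yz_class_eq_fibre by (rule partition_on_fibres)
  moreover have "ordinarily_lumpable (fcfs_P Vyz Eyz \<beta>) (yz_class y z ` Syz)"
    using yz_class_eq_fibre lumped_transition[OF yz beta_sum beta_other]
    by (rule ordinarily_lumpable_fibres)
  moreover have "merge_word w = merge_word w' \<longleftrightarrow> yz_class y z w = yz_class y z w'"
    if "w \<in> Syz" "w' \<in> Syz" for w w'
    using fibre_eq_iff[OF yz_class_eq_fibre that] by simp
  ultimately show ?thesis
    unfolding Let_def using merge_image_states lumped_transition[OF yz beta_sum beta_other] by blast
qed

end
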